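(* For every dimension $d\geq 2$ and every $0<p<1/2$, every branching point of every solution to the Gilbert--Steiner problem in $\mathbb{R}^d$ with cost $c(x)=x^p$ has degree three (only triple branching occurs).
   Context: Let $\mu^+,\mu^-$ be finite measures on $\mathbb{R}^d$ with finite supports and equal total mass. A $(\mu^+,\mu^-)$-flow consists of a finite vertex set $V\subset\mathbb{R}^d$ containing the support of $\mu^+-\mu^-$, a finite set $E$ of unordered pairs $\{x,y\}\subset V$, and non-zero reals $m(x,y)=-m(y,x)$ on edges such that $\mu^+-\mu^-=\sum_{\{x,y\}\in E} m(x,y)(\delta_y-\delta_x)$. The Gilbert functional is $\sum_{\{x,y\}\in E}|m(x,y)|^p\,|x-y|$; a solution of the Gilbert--Steiner problem is a flow minimizing it. Branching points are vertices not in $\operatorname{supp}\mu^+\cup\operatorname{supp}\mu^-$; branching points of degree 2 are understood to be eliminated by merging their two edges. *)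

theory Defs
  imports "HOL-Analysis.Analysis"
begin

text \<open>Finite measures with finite support on a Euclidean space are represented by
their point masses \<open>\<mu> :: 'a \<Rightarrow> real\<close>.\<close>

definition supp_fun :: "('a \<Rightarrow> real) \<Rightarrow> 'a set" where
  "supp_fun \<mu> = {x. \<mu> x \<noteq> 0}"

definition fin_measure :: "('a \<Rightarrow> real) \<Rightarrow> bool" where
  "fin_measure \<mu> \<longleftrightarrow> (\<forall>x. 0 \<le> \<mu> x) \<and> finite (supp_fun \<mu>)"

text \<open>A \<open>(\<mu>\<^sup>+,\<mu>\<^sup>-)\<close>-flow: vertex set \<open>V\<close>, edges \<open>E\<close> (unordered pairs of distinct
vertices), antisymmetric non-zero multiplicities \<open>m\<close> on edges, and the balance
condition \<open>\<mu>\<^sup>+ - \<mu>\<^sup>- = \<Sum>\<^bsub>{x,y}\<in>E\<^esub> m(x,y)(\<delta>\<^sub>y - \<delta>\<^sub>x)\<close>, evaluated pointwise at each z.\<close>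

definition is_flow ::
  "('a \<Rightarrow> real) \<Rightarrow> ('a \<Rightarrow> real) \<Rightarrow> 'a set \<Rightarrow> 'a set set \<Rightarrow> ('a \<Rightarrow> 'a \<Rightarrow> real) \<Rightarrow> bool" where
  "is_flow \<mu>p \<mu>m V E m \<longleftrightarrow>
     finite V \<and>
     supp_fun (\<lambda>x. \<mu>p x - \<mu>m x) \<subseteq> V \<and>
     (\<forall>e\<in>E. \<exists>x y. e = {x, y} \<and> x \<noteq> y \<and> x \<in> V \<and> y \<in> V \<and> m x y \<noteq> 0) \<and>
     (\<forall>x y. m x y = - m y x) \<and>
     (\<forall>z. \<mu>p z - \<mu>m z =
           (\<Sum>e\<in>E. (if z \<in> e then (\<Sum>x\<in>e - {z}. m x z) else 0)))"

definition darts :: "'a set set \<Rightarrow> ('a \<times> 'a) set" where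
  "darts E = {(x, y). x \<noteq> y \<and> {x, y} \<in> E}"

text \<open>Gilbert functional \<open>\<Sum>\<^bsub>{x,y}\<in>E\<^esub> |m(x,y)|^p |x-y|\<close>; every unordered edge is counted
twice in \<open>darts E\<close>, hence the factor 1/2.\<close>

definition gilbert_cost ::
  "real \<Rightarrow> 'a::real_normed_vector set set \<Rightarrow> ('a \<Rightarrow> 'a \<Rightarrow> real) \<Rightarrow> real" where
  "gilbert_cost p E m = (1/2) * (\<Sum>(x, y)\<in>darts E. \<bar>m x y\<bar> powr p * dist x y)"

definition gilbert_steiner_solution ::
  "real \<Rightarrow> ('a::real_normed_vector \<Rightarrow> real) \<Rightarrow> ('a \<Rightarrow> real) \<Rightarrow> 'a set \<Rightarrow> 'a set set
     \<Rightarrow> ('a \<Rightarrow> 'a \<Rightarrow> real) \<Rightarrow> bool" where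
  "gilbert_steiner_solution p \<mu>p \<mu>m V E m \<longleftrightarrow>
     is_flow \<mu>p \<mu>m V E m \<and>
     (\<forall>V' E' m'. is_flow \<mu>p \<mu>m V' E' m' \<longrightarrow> gilbert_cost p E m \<le> gilbert_cost p E' m')"

definition vdegree :: "'a set set \<Rightarrow> 'a \<Rightarrow> nat" where
  "vdegree E v = card {e\<in>E. v \<in> e}"

text \<open>Branching points: vertices outside \<open>supp \<mu>\<^sup>+ \<union> supp \<mu>\<^sup>-\<close> that carry at least one edge
(isolated vertices of \<open>V\<close> are irrelevant to the flow).\<close>

definition branching_point ::
  "('a \<Rightarrow> real) \<Rightarrow> ('a \<Rightarrow> real) \<Rightarrow> 'a set \<Rightarrow> 'a set set \<Rightarrow> 'a \<Rightarrow> bool" where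
  "branching_point \<mu>p \<mu>m V E v \<longleftrightarrow>
     v \<in> V \<and> v \<notin> supp_fun \<mu>p \<union> supp_fun \<mu>m \<and> vdegree E v \<ge> 1"

end

theory Submission
  imports Defs
begin

text \<open>Let \<open>v\<close> be a vertex of an optimal flow at which \<open>\<mu>\<^sup>+\<close> and \<open>\<mu>\<^sup>-\<close> vanish, let
\<open>f\<^sub>1, \<dots>, f\<^sub>k\<close> be the fluxes on its \<open>k\<close> edges (they sum to zero) and put
\<open>W\<^sub>i = |f\<^sub>i|\<^sup>p u\<^sub>i\<close>, where \<open>u\<^sub>i\<close> is the unit vector from \<open>v\<close> towards the \<open>i\<close>-th neighbour.
Rerouting the edges to two neighbours \<open>i \<noteq> j\<close> through a new vertex \<open>w\<close> close to \<open>v\<close> must not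
decrease the cost, and letting \<open>w \<rightarrow> v\<close> gives \<open>\<parallel>W\<^sub>i + W\<^sub>j\<parallel> \<le> |f\<^sub>i + f\<^sub>j|\<^sup>p\<close>.
Summing squares over ordered pairs,
\<open>\<Sum>\<^sub>i\<^sub>\<noteq>\<^sub>j \<parallel>W\<^sub>i + W\<^sub>j\<parallel>\<^sup>2 = 2(k - 2) \<Sum> \<parallel>W\<^sub>i\<parallel>\<^sup>2 + 2 \<parallel>\<Sum> W\<^sub>i\<parallel>\<^sup>2\<close>, so
\<open>2(k - 2) \<Sum> |f\<^sub>i|\<^sup>q \<le> \<Sum>\<^sub>i\<^sub>\<noteq>\<^sub>j |f\<^sub>i + f\<^sub>j|\<^sup>q\<close> with \<open>q = 2p < 1\<close>.
Conversely, Hlawka-type inequalities for the concave function \<open>t \<mapsto> t\<^sup>q\<close>, propagated by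
repeatedly merging two fluxes of equal sign, give the strict reverse inequality as soon as
\<open>k \<ge> 4\<close>. Hence \<open>k \<le> 3\<close>; \<open>k = 1\<close> is impossible because the fluxes sum to zero, and \<open>k = 2\<close>
is excluded by hypothesis.\<close>

section \<open>Concavity inequalities for real powers\<close>

lemma powr_shift_diff_less:
  fixes r y s t :: real
  assumes r: "r < 0" and y: "0 < y" and s: "0 < s" and st: "s < t"
  shows "t powr r - (t + y) powr r < s powr r - (s + y) powr r"
proof -
  have "(\<lambda>u. u powr r - (u + y) powr r) t < (\<lambda>u. u powr r - (u + y) powr r) s"
  proof (rule DERIV_neg_imp_decreasing_open[OF st])
    fix u assume u: "s < u" "u < t"
    have "(u + y) powr (r - 1) < u powr (r - 1)"
      using powr_less_mono2_neg[of "r - 1" u "u + y"] u s y r by auto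
    then have "r * u powr (r - 1) - r * (u + y) powr (r - 1) < 0"
      using r by (simp add: algebra_simps mult_less_cancel_left_neg)
    moreover have "DERIV (\<lambda>u. u powr r - (u + y) powr r) u
        :> r * u powr (r - 1) - r * (u + y) powr (r - 1)"
      using u s y by (auto intro!: derivative_eq_intros)
    ultimately show "\<exists>l. DERIV (\<lambda>u. u powr r - (u + y) powr r) u :> l \<and> l < 0" by blast
  next
    show "continuous_on {s..t} (\<lambda>u. u powr r - (u + y) powr r)"
      using s y by (auto intro!: continuous_intros)
  qed
  then show ?thesis by simp
qed

lemma powr_Hlawka_pos:
  fixes q x y z :: real
  assumes q: "0 < q" "q < 1" and x: "0 < x" and y: "0 < y" and z: "0 < z"
  shows "(x + y) powr q + (x + z) powr q + (y + z) powr q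
       < x powr q + y powr q + z powr q + (x + y + z) powr q"
proof -
  define \<phi> where "\<phi> u = u powr q + (u + y + z) powr q - (u + y) powr q - (u + z) powr q" for u :: real
  have "\<phi> 0 < \<phi> x"
  proof (rule DERIV_pos_imp_increasing_open[OF x])
    fix u assume u: "0 < u" "u < x"
    have "(u + z) powr (q - 1) - (u + z + y) powr (q - 1) < u powr (q - 1) - (u + y) powr (q - 1)"
      using powr_shift_diff_less[of "q - 1" y u "u + z"] q u y z by auto
    then have "0 < q * (u powr (q - 1) + (u + y + z) powr (q - 1)
                        - (u + y) powr (q - 1) - (u + z) powr (q - 1))"
      using q by (intro mult_pos_pos) (auto simp: algebra_simps)
    moreover have "DERIV \<phi> u :> q * u powr (q - 1) + q * (u + y + z) powr (q - 1)
                                 - q * (u + y) powr (q - 1) - q * (u + z) powr (q - 1)"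
      unfolding \<phi>_def using u y z by (auto intro!: derivative_eq_intros)
    ultimately show "\<exists>l. DERIV \<phi> u :> l \<and> 0 < l" by (auto simp: algebra_simps)
  next
    show "continuous_on {0..x} \<phi>"
      unfolding \<phi>_def using y z q by (auto intro!: continuous_intros continuous_on_powr')
  qed
  then show ?thesis unfolding \<phi>_def using q by (simp add: algebra_simps)
qed

lemma powr_add_less:
  fixes q a b :: real
  assumes q: "0 < q" "q < 1" and a: "0 < a" and b: "0 < b"
  shows "(a + b) powr q < a powr q + b powr q"
proof -
  define s where "s = a + b"
  have s: "0 < s" using a b s_def by simp
  have "a / s < (a / s) powr q" "b / s < (b / s) powr q"
    using powr_less_mono'[of "a / s" q 1] powr_less_mono'[of "b / s" q 1] q a b s_def
    by (simp_all add: field_simps)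
  moreover have "a / s + b / s = 1" using s s_def by (simp add: add_divide_distrib[symmetric])
  ultimately have "1 < (a powr q + b powr q) / s powr q"
    using a b s by (simp add: powr_divide add_divide_distrib)
  then show ?thesis using s s_def by (simp add: field_simps)
qed

lemma powr_two_two_less_of_max:
  fixes q a b c d :: real
  assumes q: "0 < q" "q < 1" and pos: "0 < a" "0 < b" "0 < c" "0 < d"
    and sum: "a + b = c + d" and max: "b \<le> a" "c \<le> a" "d \<le> a"
  shows "(a + b) powr q + \<bar>a - c\<bar> powr q + \<bar>a - d\<bar> powr q
       < a powr q + b powr q + c powr q + d powr q"
proof -
  have "\<bar>a - c\<bar> powr q \<le> d powr q" "\<bar>a - d\<bar> powr q \<le> c powr q"
    using sum max pos q by (auto intro: powr_mono2)
  then show ?thesis using powr_add_less[OF q pos(1,2)] by linarith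
qed

lemma powr_two_two_less:
  fixes q a b c d :: real
  assumes q: "0 < q" "q < 1" and pos: "0 < a" "0 < b" "0 < c" "0 < d"
    and sum: "a + b = c + d"
  shows "(a + b) powr q + \<bar>a - c\<bar> powr q + \<bar>a - d\<bar> powr q
       < a powr q + b powr q + c powr q + d powr q"
proof -
  \<comment> \<open>Both sides are invariant under swapping \<open>a, b\<close>, swapping \<open>c, d\<close>,
      and swapping the pairs \<open>(a, b)\<close>, \<open>(c, d)\<close>; so we may take \<open>a\<close> maximal.\<close>
  have "\<bar>b - c\<bar> = \<bar>a - d\<bar>" "\<bar>b - d\<bar> = \<bar>a - c\<bar>" "\<bar>c - b\<bar> = \<bar>a - d\<bar>"
    "\<bar>d - b\<bar> = \<bar>a - c\<bar>" "c + d = a + b"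
    using sum by arith+
  then have sym: "\<bar>b - c\<bar> powr q = \<bar>a - d\<bar> powr q" "\<bar>b - d\<bar> powr q = \<bar>a - c\<bar> powr q"
    "\<bar>c - b\<bar> powr q = \<bar>a - d\<bar> powr q" "\<bar>d - b\<bar> powr q = \<bar>a - c\<bar> powr q"
    "\<bar>c - a\<bar> powr q = \<bar>a - c\<bar> powr q" "\<bar>d - a\<bar> powr q = \<bar>a - d\<bar> powr q"
    "(b + a) powr q = (a + b) powr q" "(c + d) powr q = (a + b) powr q" "(d + c) powr q = (a + b) powr q"
    by (simp_all add: abs_minus_commute add.commute)
  consider "b \<le> a" "c \<le> a" "d \<le> a" | "a \<le> b" "c \<le> b" "d \<le> b"
    | "a \<le> c" "b \<le> c" "d \<le> c" | "a \<le> d" "b \<le> d" "c \<le> d"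
    by linarith
  then show ?thesis
  proof cases
    case 1
    then show ?thesis using powr_two_two_less_of_max[OF q pos sum] by blast
  next
    case 2
    have "(b + a) powr q + \<bar>b - c\<bar> powr q + \<bar>b - d\<bar> powr q
        < b powr q + a powr q + c powr q + d powr q"
      using 2 sum by (intro powr_two_two_less_of_max[OF q pos(2,1,3,4)]) auto
    then show ?thesis using sym by linarith
  next
    case 3
    have "(c + d) powr q + \<bar>c - a\<bar> powr q + \<bar>c - b\<bar> powr q
        < c powr q + d powr q + a powr q + b powr q"
      using 3 sum by (intro powr_two_two_less_of_max[OF q pos(3,4,1,2)]) auto
    then show ?thesis using sym by linarith
  next
    case 4
    have "(d + c) powr q + \<bar>d - a\<bar> powr q + \<bar>d - b\<bar> powr q
        < d powr q + c powr q + a powr q + b powr q"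
      using 4 sum by (intro powr_two_two_less_of_max[OF q pos(4,3,1,2)]) auto
    then show ?thesis using sym by linarith
  qed
qed

lemma powr_Hlawka_less_pos:
  fixes q x y z :: real
  assumes q: "0 < q" "q < 1" and x: "0 < x" and y: "0 < y" and z: "z \<noteq> 0"
    and xyz: "x + y + z \<noteq> 0"
  shows "\<bar>x + y\<bar> powr q + \<bar>x + z\<bar> powr q + \<bar>y + z\<bar> powr q
       < \<bar>x\<bar> powr q + \<bar>y\<bar> powr q + \<bar>z\<bar> powr q + \<bar>x + y + z\<bar> powr q"
proof -
  consider "0 < z" | "z < 0" "0 < x + y + z" | "x + y + z < 0"
    using z xyz by linarith
  then show ?thesis
  proof cases
    case 1
    then show ?thesis using powr_Hlawka_pos[OF q x y 1] x y by simp
  next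
    case 2
    then show ?thesis
      using powr_two_two_less[OF q x y, of "- z" "x + y + z"] x y
      by (simp add: abs_minus_commute add.commute)
  next
    case 3
    \<comment> \<open>Here \<open>x, y, -(x + y + z)\<close> are the three positive numbers.\<close>
    have "\<bar>x + y\<bar> = x + y" "\<bar>x + z\<bar> = y + - (x + y + z)" "\<bar>y + z\<bar> = x + - (x + y + z)"
      "\<bar>z\<bar> = x + y + - (x + y + z)" "\<bar>x + y + z\<bar> = - (x + y + z)"
      using x y 3 by linarith+
    then show ?thesis
      using powr_Hlawka_pos[OF q x y, of "- (x + y + z)"] x y 3 by simp
  qed
qed

lemma powr_Hlawka_less:
  fixes q x y z :: real
  assumes q: "0 < q" "q < 1" and xy: "0 < x * y" and z: "z \<noteq> 0" and xyz: "x + y + z \<noteq> 0"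
  shows "\<bar>x + y\<bar> powr q + \<bar>x + z\<bar> powr q + \<bar>y + z\<bar> powr q
       < \<bar>x\<bar> powr q + \<bar>y\<bar> powr q + \<bar>z\<bar> powr q + \<bar>x + y + z\<bar> powr q"
proof (cases "0 < x")
  case True
  then show ?thesis using powr_Hlawka_less_pos[OF q _ _ z xyz] xy by (simp add: zero_less_mult_iff)
next
  case False
  then have neg: "0 < - x" "0 < - y" "- z \<noteq> 0" "- x + - y + - z \<noteq> 0"
    using xy z xyz by (auto simp: zero_less_mult_iff)
  have "\<bar>- x + - y\<bar> = \<bar>x + y\<bar>" "\<bar>- x + - z\<bar> = \<bar>x + z\<bar>" "\<bar>- y + - z\<bar> = \<bar>y + z\<bar>"
    "\<bar>- x + - y + - z\<bar> = \<bar>x + y + z\<bar>"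
    by arith+
  then show ?thesis using powr_Hlawka_less_pos[OF q neg] by simp
qed

lemma powr_Hlawka_le:
  fixes q x y z :: real
  assumes q: "0 < q" "q < 1" and xy: "0 < x * y"
  shows "\<bar>x + y\<bar> powr q + \<bar>x + z\<bar> powr q + \<bar>y + z\<bar> powr q
       \<le> \<bar>x\<bar> powr q + \<bar>y\<bar> powr q + \<bar>z\<bar> powr q + \<bar>x + y + z\<bar> powr q"
proof -
  consider "z = 0" | "x + y + z = 0" | "z \<noteq> 0" "x + y + z \<noteq> 0" by blast
  then show ?thesis
  proof cases
    case 2
    then have "\<bar>x + y\<bar> = \<bar>z\<bar>" "\<bar>x + z\<bar> = \<bar>y\<bar>" "\<bar>y + z\<bar> = \<bar>x\<bar>" by linarith+
    then show ?thesis using 2 by simp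
  next
    case 3
    then show ?thesis using powr_Hlawka_less[OF q xy, of z] by simp
  qed simp
qed

section \<open>Pair sums of fluxes at a vertex\<close>

definition pair_powr_sum :: "real \<Rightarrow> 'b set \<Rightarrow> ('b \<Rightarrow> real) \<Rightarrow> real" where
  "pair_powr_sum q N f = (\<Sum>x\<in>N. \<Sum>y\<in>N - {x}. \<bar>f x + f y\<bar> powr q)"

lemma pair_powr_sum_cong:
  "(\<And>x. x \<in> N \<Longrightarrow> f x = g x) \<Longrightarrow> pair_powr_sum q N f = pair_powr_sum q N g"
  unfolding pair_powr_sum_def by (intro sum.cong) auto

lemma pair_powr_sum_empty [simp]: "pair_powr_sum q {} f = 0"
  by (simp add: pair_powr_sum_def)

lemma pair_powr_sum_insert:
  assumes "finite N" "a \<notin> N"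
  shows "pair_powr_sum q (insert a N) f = pair_powr_sum q N f + 2 * (\<Sum>y\<in>N. \<bar>f a + f y\<bar> powr q)"
proof -
  have "(\<Sum>y\<in>insert a N - {x}. \<bar>f x + f y\<bar> powr q)
      = \<bar>f a + f x\<bar> powr q + (\<Sum>y\<in>N - {x}. \<bar>f x + f y\<bar> powr q)" if "x \<in> N" for x
  proof -
    have "insert a N - {x} = insert a (N - {x})" using that assms by auto
    then show ?thesis using assms by (simp add: add.commute)
  qed
  then show ?thesis
    unfolding pair_powr_sum_def using assms by (simp add: sum.distrib)
qed

definition pair_powr_excess :: "real \<Rightarrow> 'b set \<Rightarrow> ('b \<Rightarrow> real) \<Rightarrow> real" where
  "pair_powr_excess q N f = pair_powr_sum q N f - 2 * (real (card N) - 2) * (\<Sum>x\<in>N. \<bar>f x\<bar> powr q)"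

lemma pair_powr_excess_three:
  assumes "card N = 3" and "(\<Sum>x\<in>N. f x) = 0"
  shows "pair_powr_excess q N f = 0"
proof -
  obtain a b c where N: "N = {a, b, c}" and abc: "a \<noteq> b" "b \<noteq> c" "a \<noteq> c"
    using assms(1) card_3_iff[of N] by auto
  then have "f a + f b + f c = 0" using assms(2) by simp
  then have "\<bar>f a + f b\<bar> = \<bar>f c\<bar>" "\<bar>f a + f c\<bar> = \<bar>f b\<bar>" "\<bar>f b + f c\<bar> = \<bar>f a\<bar>"
    by linarith+
  then show ?thesis
    unfolding pair_powr_excess_def N using abc by (simp add: pair_powr_sum_insert)
qed

lemma pair_powr_excess_merge_less:
  fixes q :: real and f :: "'b \<Rightarrow> real"
  assumes q: "0 < q" "q < 1" and fin: "finite N"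
    and ab: "a \<in> N" "b \<in> N" "a \<noteq> b" "0 < f a * f b"
    and y: "y \<in> N - {a, b}" "f y \<noteq> 0" "f a + f b + f y \<noteq> 0"
  defines "g \<equiv> f(a := f a + f b)"
  shows "pair_powr_excess q N f < pair_powr_excess q (N - {b}) g"
proof -
  define M where "M = N - {a, b}"
  have finM: "finite M" and abM: "a \<notin> M" "b \<notin> M" using fin M_def by auto
  have N: "N = insert a (insert b M)" and Nb: "N - {b} = insert a M" using ab M_def by auto
  have card: "real (card N) = real (card M) + 2" "real (card (N - {b})) = real (card M) + 1"
    using N Nb finM abM ab by simp_all
  have gM: "g x = f x" if "x \<in> M" for x using that abM g_def by auto
  have PN: "pair_powr_sum q N f = pair_powr_sum q M f
      + 2 * (\<Sum>y\<in>M. \<bar>f b + f y\<bar> powr q) + 2 * (\<bar>f a + f b\<bar> powr q + (\<Sum>y\<in>M. \<bar>f a + f y\<bar> powr q))"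
    unfolding N using finM abM ab by (simp add: pair_powr_sum_insert)
  have PNb: "pair_powr_sum q (N - {b}) g = pair_powr_sum q M f + 2 * (\<Sum>y\<in>M. \<bar>f a + f b + f y\<bar> powr q)"
    unfolding Nb using finM abM gM pair_powr_sum_cong[of M g f q]
    by (simp add: pair_powr_sum_insert g_def)
  have HN: "(\<Sum>x\<in>N. \<bar>f x\<bar> powr q) = \<bar>f a\<bar> powr q + \<bar>f b\<bar> powr q + (\<Sum>x\<in>M. \<bar>f x\<bar> powr q)"
    unfolding N using finM abM ab by simp
  have HNb: "(\<Sum>x\<in>N - {b}. \<bar>g x\<bar> powr q) = \<bar>f a + f b\<bar> powr q + (\<Sum>x\<in>M. \<bar>f x\<bar> powr q)"
    unfolding Nb using finM abM gM by (simp add: g_def)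
  have "(\<Sum>y\<in>M. \<bar>f a + f b\<bar> powr q + \<bar>f a + f y\<bar> powr q + \<bar>f b + f y\<bar> powr q)
      < (\<Sum>y\<in>M. \<bar>f a\<bar> powr q + \<bar>f b\<bar> powr q + \<bar>f y\<bar> powr q + \<bar>f a + f b + f y\<bar> powr q)"
  proof (rule sum_strict_mono_ex1[OF finM])
    show "\<forall>x\<in>M. \<bar>f a + f b\<bar> powr q + \<bar>f a + f x\<bar> powr q + \<bar>f b + f x\<bar> powr q
        \<le> \<bar>f a\<bar> powr q + \<bar>f b\<bar> powr q + \<bar>f x\<bar> powr q + \<bar>f a + f b + f x\<bar> powr q"
      using powr_Hlawka_le[OF q ab(4)] by blast
    show "\<exists>x\<in>M. \<bar>f a + f b\<bar> powr q + \<bar>f a + f x\<bar> powr q + \<bar>f b + f x\<bar> powr q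
        < \<bar>f a\<bar> powr q + \<bar>f b\<bar> powr q + \<bar>f x\<bar> powr q + \<bar>f a + f b + f x\<bar> powr q"
      using powr_Hlawka_less[OF q ab(4) y(2,3)] y(1) M_def by blast
  qed
  then have "real (card M) * \<bar>f a + f b\<bar> powr q + (\<Sum>y\<in>M. \<bar>f a + f y\<bar> powr q) + (\<Sum>y\<in>M. \<bar>f b + f y\<bar> powr q)
      < real (card M) * (\<bar>f a\<bar> powr q + \<bar>f b\<bar> powr q) + (\<Sum>x\<in>M. \<bar>f x\<bar> powr q)
        + (\<Sum>y\<in>M. \<bar>f a + f b + f y\<bar> powr q)"
    by (simp add: sum.distrib algebra_simps)
  then show ?thesis unfolding pair_powr_excess_def PN PNb HN HNb card by (simp add: algebra_simps)
qed

lemma exists_same_sign_pair: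
  fixes f :: "'b \<Rightarrow> real"
  assumes "3 \<le> card N" and "\<forall>x\<in>N. f x \<noteq> 0"
  obtains a b where "a \<in> N" "b \<in> N" "a \<noteq> b" "0 < f a * f b"
proof -
  obtain B where "B \<subseteq> N" "card B = 3" using obtain_subset_with_card_n[OF assms(1)] by auto
  then obtain a b c where abc: "a \<in> N" "b \<in> N" "c \<in> N" "a \<noteq> b" "b \<noteq> c" "a \<noteq> c"
    using card_3_iff[of B] by auto
  moreover have "f a \<noteq> 0" "f b \<noteq> 0" "f c \<noteq> 0" using assms(2) abc by auto
  then have "0 < f a * f b \<or> 0 < f a * f c \<or> 0 < f b * f c"
    by (simp add: zero_less_mult_iff) linarith
  then show ?thesis using that[of a b] that[of a c] that[of b c] abc by blast
qed

lemma pair_powr_excess_merge: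
  fixes q :: real and f :: "'b \<Rightarrow> real"
  assumes q: "0 < q" "q < 1" and fin: "finite N" and card: "4 \<le> card N"
    and nz: "\<forall>x\<in>N. f x \<noteq> 0" and sum: "(\<Sum>x\<in>N. f x) = 0"
  obtains b g where "b \<in> N" "\<forall>x\<in>N - {b}. g x \<noteq> 0" "(\<Sum>x\<in>N - {b}. g x) = 0"
    "pair_powr_excess q N f < pair_powr_excess q (N - {b}) g"
proof -
  have "3 \<le> card N" using card by simp
  with nz obtain a b where ab: "a \<in> N" "b \<in> N" "a \<noteq> b" "0 < f a * f b"
    by (auto elim: exists_same_sign_pair)
  define M where "M = N - {a, b}"
  have finM: "finite M" and abM: "a \<notin> M" "b \<notin> M" and cardM: "2 \<le> card M"
    using fin card ab M_def by (auto simp: card_Diff_subset)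
  have sumM: "(\<Sum>y\<in>M. f y) = - (f a + f b)"
  proof -
    have "N = insert a (insert b M)" using ab M_def by auto
    then show ?thesis using sum finM abM ab by simp
  qed
  \<comment> \<open>The at least two remaining values sum to \<open>-(f a + f b) \<noteq> 0\<close>, so not all equal it.\<close>
  obtain y where y: "y \<in> M" "f a + f b + f y \<noteq> 0"
  proof (rule ccontr)
    assume "\<not> thesis"
    then have "\<forall>y\<in>M. f y = - (f a + f b)" using that by force
    then have "(\<Sum>y\<in>M. f y) = real (card M) * - (f a + f b)" by simp
    moreover have "f a + f b \<noteq> 0" using ab(4) by (auto simp: zero_less_mult_iff)
    ultimately show False using sumM cardM by simp
  qed
  define g where "g = f(a := f a + f b)"
  show thesis
  proof
    show "b \<in> N" by fact
    show "\<forall>x\<in>N - {b}. g x \<noteq> 0"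
      using nz ab(4) by (auto simp: g_def zero_less_mult_iff)
    have "(\<Sum>x\<in>M. g x) = (\<Sum>x\<in>M. f x)" using abM by (intro sum.cong) (auto simp: g_def)
    moreover have "N - {b} = insert a M" using ab M_def by auto
    ultimately show "(\<Sum>x\<in>N - {b}. g x) = 0" using sumM finM abM by (simp add: g_def)
    show "pair_powr_excess q N f < pair_powr_excess q (N - {b}) g"
      using pair_powr_excess_merge_less[OF q fin ab, of y] y nz M_def unfolding g_def by auto
  qed
qed

lemma pair_powr_excess_nonpos:
  fixes q :: real and f :: "'b \<Rightarrow> real"
  assumes q: "0 < q" "q < 1"
  shows "finite N \<Longrightarrow> 3 \<le> card N \<Longrightarrow> \<forall>x\<in>N. f x \<noteq> 0 \<Longrightarrow> (\<Sum>x\<in>N. f x) = 0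
    \<Longrightarrow> pair_powr_excess q N f \<le> 0"
proof (induction "card N" arbitrary: N f rule: less_induct)
  case less
  show ?case
  proof (cases "card N = 3")
    case True
    then show ?thesis using pair_powr_excess_three[OF True less.prems(4)] by simp
  next
    case False
    then have "4 \<le> card N" using less.prems(2) by simp
    then obtain b g where b: "b \<in> N" "\<forall>x\<in>N - {b}. g x \<noteq> 0" "(\<Sum>x\<in>N - {b}. g x) = 0"
      "pair_powr_excess q N f < pair_powr_excess q (N - {b}) g"
      using pair_powr_excess_merge[OF q less.prems(1) _ less.prems(3,4)] by blast
    have "pair_powr_excess q (N - {b}) g \<le> 0"
      using b less.prems(1) \<open>4 \<le> card N\<close> by (intro less.hyps) auto
    then show ?thesis using b(4) by linarith
  qed
qed

lemma pair_powr_excess_neg: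
  fixes q :: real and f :: "'b \<Rightarrow> real"
  assumes q: "0 < q" "q < 1" and fin: "finite N" and card: "4 \<le> card N"
    and nz: "\<forall>x\<in>N. f x \<noteq> 0" and sum: "(\<Sum>x\<in>N. f x) = 0"
  shows "pair_powr_excess q N f < 0"
proof -
  obtain b g where b: "b \<in> N" "\<forall>x\<in>N - {b}. g x \<noteq> 0" "(\<Sum>x\<in>N - {b}. g x) = 0"
    "pair_powr_excess q N f < pair_powr_excess q (N - {b}) g"
    using pair_powr_excess_merge[OF q fin card nz sum] by blast
  have "pair_powr_excess q (N - {b}) g \<le> 0"
    using b fin card by (intro pair_powr_excess_nonpos[OF q]) auto
  then show ?thesis using b(4) by linarith
qed

section \<open>First variation of a weighted sum of distances\<close>

lemma norm_diff_scaleR_le: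
  fixes y e :: "'a::real_inner"
  assumes y: "y \<noteq> 0" and e: "norm e = 1"
  shows "norm (y - t *\<^sub>R e) \<le> norm y - t * inner y e / norm y + t\<^sup>2 / (2 * norm y)"
proof -
  define A where "A = norm y"
  define B where "B = t * inner y e / A"
  define C where "C = t\<^sup>2 / (2 * A)"
  have A: "0 < A" using y A_def by simp
  have ee: "inner e e = 1" using e by (simp add: norm_eq_sqrt_inner)
  have yy: "inner y y = A\<^sup>2" unfolding A_def by (simp add: power2_norm_eq_inner)
  have sq: "(norm (y - t *\<^sub>R e))\<^sup>2 = A\<^sup>2 - 2 * t * inner y e + t\<^sup>2"
    unfolding power2_norm_eq_inner[of "y - t *\<^sub>R e"]
    by (simp add: inner_diff_left inner_diff_right ee yy inner_commute power2_eq_square algebra_simps)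
  have AB: "2 * A * B = 2 * t * inner y e" and AC: "2 * A * C = t\<^sup>2"
    unfolding B_def C_def using A by simp_all
  have "2 * A * (A - B + C) = (norm (y - t *\<^sub>R e))\<^sup>2 + A\<^sup>2"
    unfolding sq using AB AC by (simp add: algebra_simps power2_eq_square)
  then have "0 \<le> (2 * A) * (A - B + C)" by simp
  then have R: "0 \<le> A - B + C" using A by (simp add: zero_le_mult_iff)
  have "(norm (y - t *\<^sub>R e))\<^sup>2 = (A - B + C)\<^sup>2 - (B - C)\<^sup>2"
    unfolding sq using AB AC by (simp add: algebra_simps power2_eq_square)
  also have "\<dots> \<le> (A - B + C)\<^sup>2" by simp
  finally have "norm (y - t *\<^sub>R e) \<le> A - B + C" using R by (simp add: norm_le_square)
  then show ?thesis unfolding A_def B_def C_def .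
qed

lemma sum_weighted_dist_translate_le:
  fixes v e :: "'a::real_inner" and c :: "'a \<Rightarrow> real"
  assumes finA: "finite A" and vA: "v \<notin> A" and c: "\<forall>a\<in>A. 0 \<le> c a" and e: "norm e = 1"
  shows "(\<Sum>a\<in>A. c a * dist a (v + t *\<^sub>R e))
       \<le> (\<Sum>a\<in>A. c a * dist a v) - t * inner (\<Sum>a\<in>A. (c a / norm (a - v)) *\<^sub>R (a - v)) e
         + t\<^sup>2 * (\<Sum>a\<in>A. c a / (2 * norm (a - v)))"
proof -
  have "dist a (v + t *\<^sub>R e) \<le> dist a v - t * inner (a - v) e / norm (a - v) + t\<^sup>2 / (2 * norm (a - v))"
    if "a \<in> A" for a
  proof -
    have "dist a (v + t *\<^sub>R e) = norm ((a - v) - t *\<^sub>R e)" unfolding dist_norm by (simp add: algebra_simps)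
    also have "\<dots> \<le> norm (a - v) - t * inner (a - v) e / norm (a - v) + t\<^sup>2 / (2 * norm (a - v))"
      by (rule norm_diff_scaleR_le[OF _ e]) (use that vA in auto)
    finally show ?thesis by (simp add: dist_norm)
  qed
  then have "(\<Sum>a\<in>A. c a * dist a (v + t *\<^sub>R e))
      \<le> (\<Sum>a\<in>A. c a * (dist a v - t * inner (a - v) e / norm (a - v) + t\<^sup>2 / (2 * norm (a - v))))"
    using c by (intro sum_mono mult_left_mono) auto
  also have "\<dots> = (\<Sum>a\<in>A. c a * dist a v - t * ((c a / norm (a - v)) * inner (a - v) e)
                    + t\<^sup>2 * (c a / (2 * norm (a - v))))"
    by (intro sum.cong) (simp_all add: algebra_simps)
  finally show ?thesis
    by (simp add: inner_sum_left sum.distrib sum_subtractf sum_distrib_left)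
qed

lemma norm_sum_weighted_directions_le:
  fixes v :: "'a::real_inner" and c :: "'a \<Rightarrow> real"
  assumes finF: "finite F" and finA: "finite A" and vA: "v \<notin> A"
    and c: "\<forall>a\<in>A. 0 \<le> c a" and K: "0 \<le> K"
    and min: "\<forall>w. w \<notin> F \<longrightarrow> (\<Sum>a\<in>A. c a * dist a v) \<le> (\<Sum>a\<in>A. c a * dist a w) + K * dist v w"
  shows "norm (\<Sum>a\<in>A. (c a / norm (a - v)) *\<^sub>R (a - v)) \<le> K"
proof (rule ccontr)
  define W where "W = (\<Sum>a\<in>A. (c a / norm (a - v)) *\<^sub>R (a - v))"
  define C where "C = (\<Sum>a\<in>A. c a / (2 * norm (a - v)))"
  assume "\<not> norm W \<le> K"
  then have gt: "K < norm W" and W: "W \<noteq> 0" using K unfolding W_def by auto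
  define e where "e = W /\<^sub>R norm W"
  have e: "norm e = 1" and We: "inner W e = norm W"
    unfolding e_def using W by (simp_all add: power2_norm_eq_inner[symmetric] power2_eq_square)
  have C: "0 \<le> C" unfolding C_def using c by (auto intro: sum_nonneg)
  define \<delta> where "\<delta> = (norm W - K) / (C + 1)"
  have \<delta>: "0 < \<delta>" unfolding \<delta>_def using gt C by simp
  \<comment> \<open>Move \<open>v\<close> a small distance \<open>t\<close> in the direction \<open>e\<close>, avoiding the finitely many points of \<open>F\<close>.\<close>
  have "finite ((\<lambda>x. inner (x - v) e) ` F)" using finF by simp
  then obtain t where t: "0 < t" "t < \<delta>" "t \<notin> (\<lambda>x. inner (x - v) e) ` F"
    using infinite_Ioo[OF \<delta>] by (meson finite_subset greaterThanLessThan_iff subsetI)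
  define w where "w = v + t *\<^sub>R e"
  have "inner (w - v) e = t" unfolding w_def using e by (simp add: norm_eq_sqrt_inner)
  then have wF: "w \<notin> F" using t(3) by force
  have "dist v w = t" unfolding w_def using e t by (simp add: dist_norm)
  then have "(\<Sum>a\<in>A. c a * dist a v) \<le> (\<Sum>a\<in>A. c a * dist a w) + K * t"
    using min[rule_format, OF wF] by simp
  also have "\<dots> \<le> (\<Sum>a\<in>A. c a * dist a v) - t * norm W + t\<^sup>2 * C + K * t"
    using sum_weighted_dist_translate_le[OF finA vA c e, of t] unfolding w_def W_def[symmetric] C_def[symmetric] We
    by simp
  finally have "0 \<le> t * (K - norm W + t * C)" by (simp add: power2_eq_square algebra_simps)
  then have "norm W - K \<le> t * C" using t(1) by (simp add: zero_le_mult_iff)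
  moreover have "t * (C + 1) < norm W - K" using t(2) C unfolding \<delta>_def by (simp add: field_simps)
  ultimately show False using t(1) by (simp add: algebra_simps)
qed

lemma sum_pairs_norm_add_sq:
  fixes w :: "'b \<Rightarrow> 'a::real_inner"
  assumes fin: "finite N"
  shows "(\<Sum>x\<in>N. \<Sum>y\<in>N - {x}. (norm (w x + w y))\<^sup>2)
     = 2 * (real (card N) - 2) * (\<Sum>x\<in>N. (norm (w x))\<^sup>2) + 2 * (norm (\<Sum>x\<in>N. w x))\<^sup>2"
proof -
  have sq: "(norm (u + u'))\<^sup>2 = (norm u)\<^sup>2 + (norm u')\<^sup>2 + 2 * inner u u'" for u u' :: 'a
    by (simp add: power2_norm_eq_inner inner_add_left inner_add_right inner_commute)
  have row: "(\<Sum>y\<in>N - {x}. (norm (w x + w y))\<^sup>2)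
      = (\<Sum>y\<in>N. (norm (w x))\<^sup>2 + (norm (w y))\<^sup>2 + 2 * inner (w x) (w y)) - 4 * (norm (w x))\<^sup>2"
    if "x \<in> N" for x
    using that fin unfolding sq by (simp add: sum_diff1 flip: power2_norm_eq_inner)
  have "(\<Sum>x\<in>N. \<Sum>y\<in>N - {x}. (norm (w x + w y))\<^sup>2)
      = (\<Sum>x\<in>N. (\<Sum>y\<in>N. (norm (w x))\<^sup>2 + (norm (w y))\<^sup>2 + 2 * inner (w x) (w y)) - 4 * (norm (w x))\<^sup>2)"
    using row by (rule sum.cong[OF refl])
  also have "\<dots> = 2 * real (card N) * (\<Sum>x\<in>N. (norm (w x))\<^sup>2) + 2 * (\<Sum>x\<in>N. \<Sum>y\<in>N. inner (w x) (w y))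
        - 4 * (\<Sum>x\<in>N. (norm (w x))\<^sup>2)"
    by (simp add: sum.distrib sum_subtractf sum_distrib_left sum_distrib_right
        sum.swap[of "\<lambda>x y. (norm (w y))\<^sup>2"] algebra_simps)
  also have "(\<Sum>x\<in>N. \<Sum>y\<in>N. inner (w x) (w y)) = (norm (\<Sum>x\<in>N. w x))\<^sup>2"
    by (simp only: power2_norm_eq_inner inner_sum_left inner_sum_right; rule sum.swap)
  finally show ?thesis by (simp add: algebra_simps)
qed

section \<open>Flows as antisymmetric matrices\<close>

definition flow_matrix :: "'a set set \<Rightarrow> ('a \<Rightarrow> 'a \<Rightarrow> real) \<Rightarrow> 'a \<Rightarrow> 'a \<Rightarrow> real" where
  "flow_matrix E m x y = (if {x, y} \<in> E then m x y else 0)"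

definition support_edges :: "'a set \<Rightarrow> ('a \<Rightarrow> 'a \<Rightarrow> real) \<Rightarrow> 'a set set" where
  "support_edges V g = {{x, y} | x y. x \<in> V \<and> y \<in> V \<and> x \<noteq> y \<and> g x y \<noteq> 0}"

text \<open>\<open>is_flow\<close> restated for a single antisymmetric matrix \<open>g\<close>, whose non-zero entries are the
edges. Matrices can be added, which is how optimal flows are perturbed below.\<close>

definition matrix_flow ::
  "('a \<Rightarrow> real) \<Rightarrow> ('a \<Rightarrow> real) \<Rightarrow> 'a set \<Rightarrow> ('a \<Rightarrow> 'a \<Rightarrow> real) \<Rightarrow> bool" where
  "matrix_flow \<mu>p \<mu>m V g \<longleftrightarrow>
     finite V \<and> supp_fun (\<lambda>x. \<mu>p x - \<mu>m x) \<subseteq> V \<and>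
     (\<forall>x y. g x y = - g y x) \<and> (\<forall>x y. g x y \<noteq> 0 \<longrightarrow> x \<in> V \<and> y \<in> V) \<and>
     (\<forall>z\<in>V. \<mu>p z - \<mu>m z = (\<Sum>x\<in>V - {z}. g x z))"

definition matrix_cost :: "real \<Rightarrow> 'a::real_normed_vector set \<Rightarrow> ('a \<Rightarrow> 'a \<Rightarrow> real) \<Rightarrow> real" where
  "matrix_cost p V g = (1/2) * (\<Sum>(x, y)\<in>V \<times> V. \<bar>g x y\<bar> powr p * dist x y)"

lemma finite_support_edges: "finite V \<Longrightarrow> finite (support_edges V g)"
  by (rule finite_subset[of _ "Pow V"]) (auto simp: support_edges_def)

lemma bij_betw_incident_support_edges:
  assumes z: "z \<in> V" and anti: "\<And>x y. g x y = - g y x"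
  shows "bij_betw (\<lambda>x. {x, z}) {x \<in> V - {z}. g x z \<noteq> 0} {e \<in> support_edges V g. z \<in> e}"
proof (rule bij_betw_imageI)
  show "inj_on (\<lambda>x. {x, z}) {x \<in> V - {z}. g x z \<noteq> 0}"
    by (auto simp: inj_on_def doubleton_eq_iff)
  show "(\<lambda>x. {x, z}) ` {x \<in> V - {z}. g x z \<noteq> 0} = {e \<in> support_edges V g. z \<in> e}"
  proof (intro equalityI subsetI)
    fix e assume "e \<in> (\<lambda>x. {x, z}) ` {x \<in> V - {z}. g x z \<noteq> 0}"
    then obtain x where "x \<in> V" "x \<noteq> z" "g x z \<noteq> 0" "e = {x, z}" by auto
    then show "e \<in> {e \<in> support_edges V g. z \<in> e}" using z unfolding support_edges_def by blast
  next
    fix e assume "e \<in> {e \<in> support_edges V g. z \<in> e}"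
    then obtain x y where e: "e = {x, y}" "x \<in> V" "y \<in> V" "x \<noteq> y" "g x y \<noteq> 0" "z \<in> e"
      unfolding support_edges_def by auto
    then have "z = x \<or> z = y" by auto
    then show "e \<in> (\<lambda>x. {x, z}) ` {x \<in> V - {z}. g x z \<noteq> 0}"
    proof
      assume "z = x"
      then have "y \<in> V - {z}" "g y z \<noteq> 0" "e = {y, z}"
        using e(1,3,4,5) anti[of y x] by (auto simp: insert_commute)
      then show ?thesis by (intro image_eqI[of _ _ y]) auto
    next
      assume "z = y"
      then have "x \<in> V - {z}" "g x z \<noteq> 0" "e = {x, z}" using e(1,2,4,5) by auto
      then show ?thesis by (intro image_eqI[of _ _ x]) auto
    qed
  qed
qed

lemma sum_incident_support_edges:
  assumes fin: "finite V" and z: "z \<in> V" and anti: "\<And>x y. g x y = - g y x"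
  shows "(\<Sum>e\<in>support_edges V g. if z \<in> e then (\<Sum>x\<in>e - {z}. g x z) else 0) = (\<Sum>x\<in>V - {z}. g x z)"
proof -
  have "(\<Sum>e\<in>support_edges V g. if z \<in> e then (\<Sum>x\<in>e - {z}. g x z) else 0)
      = (\<Sum>e\<in>{e \<in> support_edges V g. z \<in> e}. \<Sum>x\<in>e - {z}. g x z)"
    using finite_support_edges[OF fin] by (simp add: sum.inter_filter)
  also have "\<dots> = (\<Sum>x\<in>{x \<in> V - {z}. g x z \<noteq> 0}. \<Sum>y\<in>{x, z} - {z}. g y z)"
    by (rule sum.reindex_bij_betw[OF bij_betw_incident_support_edges[OF z anti], symmetric])
  also have "\<dots> = (\<Sum>x\<in>{x \<in> V - {z}. g x z \<noteq> 0}. g x z)"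
    by (rule sum.cong) (auto simp: insert_Diff_if)
  also have "\<dots> = (\<Sum>x\<in>V - {z}. g x z)"
    by (rule sum.mono_neutral_left) (use fin in auto)
  finally show ?thesis .
qed

lemma darts_support_edges:
  assumes anti: "\<And>x y. g x y = - g y x"
  shows "darts (support_edges V g) = {(x, y) \<in> V \<times> V. x \<noteq> y \<and> g x y \<noteq> 0}"
proof -
  have "{x, y} \<in> support_edges V g \<longleftrightarrow> x \<in> V \<and> y \<in> V \<and> g x y \<noteq> 0" if "x \<noteq> y" for x y
    using that anti[of x y] unfolding support_edges_def by (auto simp: doubleton_eq_iff)
  then show ?thesis unfolding darts_def by auto
qed

lemma gilbert_cost_support_edges:
  assumes fin: "finite V" and anti: "\<And>x y. g x y = - g y x"
  shows "gilbert_cost p (support_edges V g) g = matrix_cost p V g"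
proof -
  have "(\<Sum>(x, y)\<in>darts (support_edges V g). \<bar>g x y\<bar> powr p * dist x y)
      = (\<Sum>(x, y)\<in>V \<times> V. \<bar>g x y\<bar> powr p * dist x y)"
    unfolding darts_support_edges[OF anti]
    by (rule sum.mono_neutral_left) (use fin in auto)
  then show ?thesis unfolding gilbert_cost_def matrix_cost_def by simp
qed

lemma is_flow_support_edges:
  assumes "matrix_flow \<mu>p \<mu>m V g"
  shows "is_flow \<mu>p \<mu>m V (support_edges V g) g"
proof -
  have fin: "finite V" and supp: "supp_fun (\<lambda>x. \<mu>p x - \<mu>m x) \<subseteq> V"
    and anti: "\<And>x y. g x y = - g y x" and bal: "\<And>z. z \<in> V \<Longrightarrow> \<mu>p z - \<mu>m z = (\<Sum>x\<in>V - {z}. g x z)"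
    using assms unfolding matrix_flow_def by blast+
  have "\<mu>p z - \<mu>m z = (\<Sum>e\<in>support_edges V g. if z \<in> e then \<Sum>x\<in>e - {z}. g x z else 0)" for z
  proof (cases "z \<in> V")
    case True
    then show ?thesis using sum_incident_support_edges[of V z g, OF fin True anti] bal[OF True] by simp
  next
    case False
    then have "\<mu>p z - \<mu>m z = 0" using supp unfolding supp_fun_def by auto
    moreover have "\<forall>e\<in>support_edges V g. z \<notin> e" using False unfolding support_edges_def by auto
    ultimately show ?thesis by simp
  qed
  moreover have "\<forall>e\<in>support_edges V g. \<exists>x y. e = {x, y} \<and> x \<noteq> y \<and> x \<in> V \<and> y \<in> V \<and> g x y \<noteq> 0"
    unfolding support_edges_def by blast
  ultimately show ?thesis unfolding is_flow_def using fin supp anti by blast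
qed

lemma flow_matrix_antisym:
  assumes "\<forall>x y. m x y = - m y x"
  shows "flow_matrix E m x y = - flow_matrix E m y x"
  unfolding flow_matrix_def using assms[rule_format, of x y] by (simp add: insert_commute)

lemma flow_matrix_nonzeroD:
  assumes "is_flow \<mu>p \<mu>m V E m" and "flow_matrix E m x y \<noteq> 0"
  shows "x \<in> V" "y \<in> V"
proof -
  have "{x, y} \<in> E" using assms(2) unfolding flow_matrix_def by (auto split: if_splits)
  then obtain x' y' where "{x, y} = {x', y'}" "x' \<noteq> y'" "x' \<in> V" "y' \<in> V"
    using assms(1) unfolding is_flow_def by blast
  then show "x \<in> V" "y \<in> V" by (auto simp: doubleton_eq_iff)
qed

lemma support_edges_flow_matrix:
  assumes "is_flow \<mu>p \<mu>m V E m"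
  shows "support_edges V (flow_matrix E m) = E"
proof
  show "support_edges V (flow_matrix E m) \<subseteq> E"
    unfolding support_edges_def flow_matrix_def by (auto split: if_splits)
  show "E \<subseteq> support_edges V (flow_matrix E m)"
  proof
    fix e assume e: "e \<in> E"
    then obtain x y where "e = {x, y}" "x \<noteq> y" "x \<in> V" "y \<in> V" "m x y \<noteq> 0"
      using assms unfolding is_flow_def by blast
    then show "e \<in> support_edges V (flow_matrix E m)"
      unfolding support_edges_def flow_matrix_def using e by auto
  qed
qed

lemma matrix_flow_flow_matrix:
  assumes fl: "is_flow \<mu>p \<mu>m V E m"
  shows "matrix_flow \<mu>p \<mu>m V (flow_matrix E m)"
proof -
  have fin: "finite V" and supp: "supp_fun (\<lambda>x. \<mu>p x - \<mu>m x) \<subseteq> V"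
    and anti: "\<forall>x y. m x y = - m y x"
    and edges: "\<forall>e\<in>E. \<exists>x y. e = {x, y} \<and> x \<noteq> y \<and> x \<in> V \<and> y \<in> V \<and> m x y \<noteq> 0"
    and bal: "\<forall>z. \<mu>p z - \<mu>m z = (\<Sum>e\<in>E. if z \<in> e then (\<Sum>x\<in>e - {z}. m x z) else 0)"
    using fl unfolding is_flow_def by blast+
  let ?g = "flow_matrix E m"
  have anti': "\<And>x y. ?g x y = - ?g y x" using flow_matrix_antisym[OF anti] .
  have bal': "\<forall>z\<in>V. \<mu>p z - \<mu>m z = (\<Sum>x\<in>V - {z}. ?g x z)"
  proof
    fix z assume z: "z \<in> V"
    have edge: "(\<Sum>x\<in>e - {z}. m x z) = (\<Sum>x\<in>e - {z}. ?g x z)" if "e \<in> E" "z \<in> e" for e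
    proof (rule sum.cong[OF refl])
      fix x assume "x \<in> e - {z}"
      moreover obtain a b where "e = {a, b}" using edges \<open>e \<in> E\<close> by blast
      ultimately have "{x, z} = e" using \<open>z \<in> e\<close> by auto
      then show "m x z = ?g x z" using \<open>e \<in> E\<close> by (simp add: flow_matrix_def)
    qed
    have "\<mu>p z - \<mu>m z = (\<Sum>e\<in>E. if z \<in> e then (\<Sum>x\<in>e - {z}. m x z) else 0)"
      by (rule bal[rule_format])
    also have "\<dots> = (\<Sum>e\<in>E. if z \<in> e then (\<Sum>x\<in>e - {z}. ?g x z) else 0)"
      by (rule sum.cong[OF refl]) (simp add: edge)
    also have "\<dots> = (\<Sum>x\<in>V - {z}. ?g x z)"
      using sum_incident_support_edges[of V z ?g, OF fin z anti'] support_edges_flow_matrix[OF fl]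
      by simp
    finally show "\<mu>p z - \<mu>m z = (\<Sum>x\<in>V - {z}. ?g x z)" .
  qed
  have "\<forall>x y. ?g x y \<noteq> 0 \<longrightarrow> x \<in> V \<and> y \<in> V" using flow_matrix_nonzeroD[OF fl] by blast
  moreover have "\<forall>x y. ?g x y = - ?g y x" using anti' by (intro allI)
  ultimately show ?thesis unfolding matrix_flow_def using fin supp bal' by blast
qed

lemma gilbert_cost_flow_matrix:
  assumes fl: "is_flow \<mu>p \<mu>m V E m"
  shows "gilbert_cost p E m = matrix_cost p V (flow_matrix E m)"
proof -
  have "gilbert_cost p E m = gilbert_cost p E (flow_matrix E m)"
    unfolding gilbert_cost_def by (rule arg_cong[where f = "\<lambda>t. 1/2 * t"], rule sum.cong)
      (auto simp: darts_def flow_matrix_def)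
  also have "\<dots> = matrix_cost p V (flow_matrix E m)"
  proof -
    have fin: "finite V" and anti: "\<forall>x y. m x y = - m y x" using fl unfolding is_flow_def by blast+
    show ?thesis
      using gilbert_cost_support_edges[of V "flow_matrix E m" p, OF fin flow_matrix_antisym[OF anti]]
        support_edges_flow_matrix[OF fl] by simp
  qed
  finally show ?thesis .
qed

lemma solution_matrix_cost_le:
  assumes sol: "gilbert_steiner_solution p \<mu>p \<mu>m V E m" and g: "matrix_flow \<mu>p \<mu>m V' g"
  shows "matrix_cost p V (flow_matrix E m) \<le> matrix_cost p V' g"
proof -
  have fl: "is_flow \<mu>p \<mu>m V E m"
    and opt: "gilbert_cost p E m \<le> gilbert_cost p (support_edges V' g) g"
    using sol is_flow_support_edges[OF g] unfolding gilbert_steiner_solution_def by blast+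
  have fin: "finite V'" and anti: "\<forall>x y. g x y = - g y x" using g unfolding matrix_flow_def by blast+
  show ?thesis
    using opt gilbert_cost_flow_matrix[OF fl] gilbert_cost_support_edges[of V' g p, OF fin anti[rule_format]]
    by simp
qed

section \<open>Rerouting two edges through a new vertex\<close>

definition dart_flow :: "'a \<Rightarrow> 'a \<Rightarrow> real \<Rightarrow> 'a \<Rightarrow> 'a \<Rightarrow> real" where
  "dart_flow a b t x y = (if x = a \<and> y = b then t else 0) - (if x = b \<and> y = a then t else 0)"

definition triangle_flow :: "'a \<Rightarrow> 'a \<Rightarrow> 'a \<Rightarrow> real \<Rightarrow> 'a \<Rightarrow> 'a \<Rightarrow> real" where
  "triangle_flow a b c t x y = dart_flow a b t x y + dart_flow b c t x y + dart_flow c a t x y"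

lemma dart_flow_antisym: "dart_flow a b t x y = - dart_flow a b t y x"
  unfolding dart_flow_def by (cases "x = a"; cases "y = b"; cases "x = b"; cases "y = a") auto

lemma triangle_flow_antisym: "triangle_flow a b c t x y = - triangle_flow a b c t y x"
  using dart_flow_antisym[of a b t x y] dart_flow_antisym[of b c t x y] dart_flow_antisym[of c a t x y]
  unfolding triangle_flow_def by linarith

lemma sum_dart_flow:
  assumes "finite A" and "a \<noteq> b"
  shows "(\<Sum>x\<in>A - {z}. dart_flow a b t x z)
       = (if z = b \<and> a \<in> A then t else 0) - (if z = a \<and> b \<in> A then t else 0)"
proof -
  have delta: "(\<Sum>x\<in>A - {z}. if x = p \<and> z = q then t else 0) = (if z = q \<and> p \<in> A - {z} then t else 0)"
    for p q using assms(1) by (cases "z = q") (simp_all add: sum.delta)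
  show ?thesis unfolding dart_flow_def sum_subtractf delta using assms(2) by auto
qed

lemma sum_triangle_flow:
  assumes "finite A" "a \<in> A" "b \<in> A" "c \<in> A" "a \<noteq> b" "b \<noteq> c" "a \<noteq> c"
  shows "(\<Sum>x\<in>A - {z}. triangle_flow a b c t x z) = 0"
  using assms unfolding triangle_flow_def sum.distrib by (simp add: sum_dart_flow)

lemma dart_flow_eq_0:
  assumes "(x, y) \<noteq> (a, b)" "(x, y) \<noteq> (b, a)"
  shows "dart_flow a b t x y = 0"
proof -
  have "\<not> (x = a \<and> y = b)" "\<not> (x = b \<and> y = a)" using assms by auto
  then show ?thesis unfolding dart_flow_def by (simp only: if_False)
qed

lemma triangle_flow_eq_0:
  assumes "(x, y) \<notin> {(a, b), (b, a), (b, c), (c, b), (c, a), (a, c)}"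
  shows "triangle_flow a b c t x y = 0"
proof -
  have ne: "(x, y) \<noteq> (a, b)" "(x, y) \<noteq> (b, a)" "(x, y) \<noteq> (b, c)" "(x, y) \<noteq> (c, b)"
    "(x, y) \<noteq> (c, a)" "(x, y) \<noteq> (a, c)"
    using assms by blast+
  have "dart_flow a b t x y = 0" using ne(1,2) by (rule dart_flow_eq_0)
  moreover have "dart_flow b c t x y = 0" using ne(3,4) by (rule dart_flow_eq_0)
  moreover have "dart_flow c a t x y = 0" using ne(5,6) by (rule dart_flow_eq_0)
  ultimately show ?thesis unfolding triangle_flow_def by simp
qed

lemma matrix_flow_add_triangle:
  assumes g: "matrix_flow \<mu>p \<mu>m V g"
    and abc: "a \<in> V" "b \<in> V" "c \<in> V" "a \<noteq> b" "b \<noteq> c" "a \<noteq> c"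
  shows "matrix_flow \<mu>p \<mu>m V (\<lambda>x y. g x y + triangle_flow a b c t x y)"
proof -
  have fin: "finite V" and supp: "supp_fun (\<lambda>x. \<mu>p x - \<mu>m x) \<subseteq> V"
    and anti: "\<forall>x y. g x y = - g y x" and gV: "\<forall>x y. g x y \<noteq> 0 \<longrightarrow> x \<in> V \<and> y \<in> V"
    and bal: "\<forall>z\<in>V. \<mu>p z - \<mu>m z = (\<Sum>x\<in>V - {z}. g x z)"
    using g unfolding matrix_flow_def by blast+
  have "\<forall>x y. g x y + triangle_flow a b c t x y = - (g y x + triangle_flow a b c t y x)"
  proof (intro allI)
    fix x y show "g x y + triangle_flow a b c t x y = - (g y x + triangle_flow a b c t y x)"
      using anti[rule_format, of x y] triangle_flow_antisym[of a b c t x y] by linarith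
  qed
  moreover have "\<forall>x y. g x y + triangle_flow a b c t x y \<noteq> 0 \<longrightarrow> x \<in> V \<and> y \<in> V"
  proof (intro allI impI)
    fix x y assume ne: "g x y + triangle_flow a b c t x y \<noteq> 0"
    show "x \<in> V \<and> y \<in> V"
    proof (cases "(x, y) \<in> {(a, b), (b, a), (b, c), (c, b), (c, a), (a, c)}")
      case True
      then show ?thesis using abc by auto
    next
      case False
      then show ?thesis using ne triangle_flow_eq_0[OF False] gV by auto
    qed
  qed
  moreover have "\<forall>z\<in>V. \<mu>p z - \<mu>m z = (\<Sum>x\<in>V - {z}. g x z + triangle_flow a b c t x z)"
    using bal sum_triangle_flow[OF fin abc] by (simp add: sum.distrib)
  ultimately show ?thesis unfolding matrix_flow_def using fin supp by blast
qed

lemma matrix_flow_insert: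
  assumes g: "matrix_flow \<mu>p \<mu>m V g"
  shows "matrix_flow \<mu>p \<mu>m (insert w V) g"
proof (cases "w \<in> V")
  case False
  have fin: "finite V" and supp: "supp_fun (\<lambda>x. \<mu>p x - \<mu>m x) \<subseteq> V"
    and anti: "\<forall>x y. g x y = - g y x" and gV: "\<forall>x y. g x y \<noteq> 0 \<longrightarrow> x \<in> V \<and> y \<in> V"
    and bal: "\<forall>z\<in>V. \<mu>p z - \<mu>m z = (\<Sum>x\<in>V - {z}. g x z)"
    using g unfolding matrix_flow_def by blast+
  have gw: "g x w = 0" "g w x = 0" for x using gV False by blast+
  have "\<forall>z\<in>insert w V. \<mu>p z - \<mu>m z = (\<Sum>x\<in>insert w V - {z}. g x z)"
  proof
    fix z assume z: "z \<in> insert w V"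
    show "\<mu>p z - \<mu>m z = (\<Sum>x\<in>insert w V - {z}. g x z)"
    proof (cases "z = w")
      case True
      then show ?thesis using supp False gw unfolding supp_fun_def by auto
    next
      case False
      then have "insert w V - {z} = insert w (V - {z})" by auto
      then show ?thesis using z False bal fin gw \<open>w \<notin> V\<close> by simp
    qed
  qed
  moreover have "\<forall>x y. g x y \<noteq> 0 \<longrightarrow> x \<in> insert w V \<and> y \<in> insert w V" using gV by blast
  ultimately show ?thesis unfolding matrix_flow_def using fin supp anti by blast
qed (simp add: insert_absorb g)

lemma matrix_cost_mono_neutral:
  assumes "finite V'" "V \<subseteq> V'" and "\<forall>x y. g x y \<noteq> 0 \<longrightarrow> x \<in> V \<and> y \<in> V"
  shows "matrix_cost p V' g = matrix_cost p V g"
  unfolding matrix_cost_def using assms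
  by (intro arg_cong[where f = "\<lambda>t. 1/2 * t"] sum.mono_neutral_right) auto

lemma matrix_cost_diff_local:
  assumes fin: "finite V" and Q: "Q \<subseteq> V \<times> V"
    and eq: "\<And>x y. x \<in> V \<Longrightarrow> y \<in> V \<Longrightarrow> (x, y) \<notin> Q \<Longrightarrow> h x y = g x y"
  shows "matrix_cost p V h - matrix_cost p V g
       = 1/2 * (\<Sum>(x, y)\<in>Q. (\<bar>h x y\<bar> powr p - \<bar>g x y\<bar> powr p) * dist x y)"
proof -
  have "matrix_cost p V h - matrix_cost p V g
      = 1/2 * (\<Sum>(x, y)\<in>V \<times> V. (\<bar>h x y\<bar> powr p - \<bar>g x y\<bar> powr p) * dist x y)"
    unfolding matrix_cost_def by (simp add: sum_subtractf case_prod_beta algebra_simps)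
  also have "(\<Sum>(x, y)\<in>V \<times> V. (\<bar>h x y\<bar> powr p - \<bar>g x y\<bar> powr p) * dist x y)
      = (\<Sum>(x, y)\<in>Q. (\<bar>h x y\<bar> powr p - \<bar>g x y\<bar> powr p) * dist x y)"
    using fin Q eq by (intro sum.mono_neutral_right) auto
  finally show ?thesis .
qed

text \<open>Adding the circulations \<open>a \<rightarrow> w \<rightarrow> v \<rightarrow> a\<close> and \<open>b \<rightarrow> w \<rightarrow> v \<rightarrow> b\<close>, carrying the
fluxes \<open>g a v\<close> and \<open>g b v\<close>, empties the edges \<open>av\<close>, \<open>bv\<close> and routes both fluxes through \<open>w\<close>.\<close>

lemma matrix_cost_reroute:
  fixes g :: "'a::real_normed_vector \<Rightarrow> 'a \<Rightarrow> real"
  assumes fin: "finite V" and anti: "\<forall>x y. g x y = - g y x"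
    and gV: "\<forall>x y. g x y \<noteq> 0 \<longrightarrow> x \<in> V \<and> y \<in> V"
    and V: "a \<in> V" "b \<in> V" "v \<in> V" and ne: "a \<noteq> v" "b \<noteq> v" "a \<noteq> b" and w: "w \<notin> V"
  defines "h \<equiv> \<lambda>x y. g x y + triangle_flow a w v (g a v) x y + triangle_flow b w v (g b v) x y"
  shows "matrix_cost p (insert w V) h
       = matrix_cost p V g - \<bar>g a v\<bar> powr p * dist a v - \<bar>g b v\<bar> powr p * dist b v
         + \<bar>g a v\<bar> powr p * dist a w + \<bar>g b v\<bar> powr p * dist b w + \<bar>g a v + g b v\<bar> powr p * dist v w"
proof -
  define Q where "Q = {(a, v), (v, a), (b, v), (v, b), (a, w), (w, a), (b, w), (w, b), (v, w), (w, v)}"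
  have fin': "finite (insert w V)" using fin by simp
  have wne: "w \<noteq> a" "w \<noteq> b" "w \<noteq> v" "a \<noteq> w" "b \<noteq> w" "v \<noteq> w" using V w by auto
  have gw: "g x w = 0" "g w x = 0" for x using gV w by blast+
  have gv: "g v a = - g a v" "g v b = - g b v" using anti by blast+
  have "h x y = g x y" if "(x, y) \<notin> Q" for x y
  proof -
    have "(x, y) \<notin> {(a, w), (w, a), (w, v), (v, w), (v, a), (a, v)}"
      "(x, y) \<notin> {(b, w), (w, b), (w, v), (v, w), (v, b), (b, v)}"
      using that unfolding Q_def by auto
    then show ?thesis unfolding h_def by (simp add: triangle_flow_eq_0)
  qed
  then have "matrix_cost p (insert w V) h - matrix_cost p (insert w V) g
      = 1/2 * (\<Sum>(x, y)\<in>Q. (\<bar>h x y\<bar> powr p - \<bar>g x y\<bar> powr p) * dist x y)"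
    using V by (intro matrix_cost_diff_local[OF fin']) (auto simp: Q_def)
  also have "\<dots> = \<bar>g a v + g b v\<bar> powr p * dist v w
      + \<bar>g a v\<bar> powr p * (dist a w - dist a v) + \<bar>g b v\<bar> powr p * (dist b w - dist b v)"
  proof -
    have "h a v = 0" "h v a = 0" "h b v = 0" "h v b = 0" "h a w = g a v" "h w a = - g a v"
      "h b w = g b v" "h w b = - g b v" "h w v = g a v + g b v" "\<bar>h v w\<bar> = \<bar>g a v + g b v\<bar>"
      unfolding h_def triangle_flow_def dart_flow_def using ne wne gw gv by simp_all
    then show ?thesis unfolding Q_def using ne wne
      by (simp add: gw gv dist_commute algebra_simps)
  qed
  moreover have "matrix_cost p (insert w V) g = matrix_cost p V g"
    using matrix_cost_mono_neutral[OF fin'] gV by blast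
  ultimately show ?thesis by (simp add: algebra_simps)
qed

lemma solution_reroute_le:
  assumes sol: "gilbert_steiner_solution p \<mu>p \<mu>m V E m"
    and V: "a \<in> V" "b \<in> V" "v \<in> V" and ne: "a \<noteq> v" "b \<noteq> v" "a \<noteq> b" and w: "w \<notin> V"
  defines "f \<equiv> \<lambda>x. flow_matrix E m x v"
  shows "\<bar>f a\<bar> powr p * dist a v + \<bar>f b\<bar> powr p * dist b v
       \<le> \<bar>f a\<bar> powr p * dist a w + \<bar>f b\<bar> powr p * dist b w + \<bar>f a + f b\<bar> powr p * dist v w"
proof -
  let ?g = "flow_matrix E m"
  define h where "h = (\<lambda>x y. ?g x y + triangle_flow a w v (f a) x y + triangle_flow b w v (f b) x y)"
  have fl: "is_flow \<mu>p \<mu>m V E m" using sol unfolding gilbert_steiner_solution_def by blast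
  have g: "matrix_flow \<mu>p \<mu>m V ?g" by (rule matrix_flow_flow_matrix[OF fl])
  then have fin: "finite V" and anti: "\<forall>x y. ?g x y = - ?g y x"
    and gV: "\<forall>x y. ?g x y \<noteq> 0 \<longrightarrow> x \<in> V \<and> y \<in> V"
    unfolding matrix_flow_def by blast+
  have wne: "a \<noteq> w" "b \<noteq> w" "w \<noteq> v" using V w by auto
  have "matrix_flow \<mu>p \<mu>m (insert w V) h"
    unfolding h_def using V ne wne
    by (intro matrix_flow_add_triangle matrix_flow_insert g) auto
  then have "matrix_cost p V ?g \<le> matrix_cost p (insert w V) h"
    by (rule solution_matrix_cost_le[OF sol])
  also have "\<dots> = matrix_cost p V ?g - \<bar>f a\<bar> powr p * dist a v - \<bar>f b\<bar> powr p * dist b v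
      + \<bar>f a\<bar> powr p * dist a w + \<bar>f b\<bar> powr p * dist b w + \<bar>f a + f b\<bar> powr p * dist v w"
    unfolding h_def f_def by (rule matrix_cost_reroute[OF fin anti gV V ne w])
  finally show ?thesis by simp
qed

section \<open>Degree of balanced vertices\<close>

lemma pair_powr_excess_nonneg_of_vectors:
  fixes w :: "'b \<Rightarrow> 'a::real_inner" and f :: "'b \<Rightarrow> real"
  assumes fin: "finite N" and single: "\<forall>x\<in>N. (norm (w x))\<^sup>2 = \<bar>f x\<bar> powr q"
    and pair: "\<forall>x\<in>N. \<forall>y\<in>N - {x}. (norm (w x + w y))\<^sup>2 \<le> \<bar>f x + f y\<bar> powr q"
  shows "0 \<le> pair_powr_excess q N f"
proof -
  have "(\<Sum>x\<in>N. \<bar>f x\<bar> powr q) = (\<Sum>x\<in>N. (norm (w x))\<^sup>2)" using single by simp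
  then have "2 * (real (card N) - 2) * (\<Sum>x\<in>N. \<bar>f x\<bar> powr q)
      \<le> (\<Sum>x\<in>N. \<Sum>y\<in>N - {x}. (norm (w x + w y))\<^sup>2)"
    unfolding sum_pairs_norm_add_sq[OF fin] by simp
  also have "\<dots> \<le> pair_powr_sum q N f"
    unfolding pair_powr_sum_def using pair by (intro sum_mono) auto
  finally show ?thesis unfolding pair_powr_excess_def by simp
qed

lemma card_incident_flow_matrix:
  assumes fl: "is_flow \<mu>p \<mu>m V E m" and v: "v \<in> V"
  shows "card {x \<in> V - {v}. flow_matrix E m x v \<noteq> 0} = vdegree E v"
proof -
  have "\<forall>x y. m x y = - m y x" using fl unfolding is_flow_def by blast
  then have "bij_betw (\<lambda>x. {x, v}) {x \<in> V - {v}. flow_matrix E m x v \<noteq> 0} {e \<in> E. v \<in> e}"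
    using bij_betw_incident_support_edges[OF v, of "flow_matrix E m"] flow_matrix_antisym
      support_edges_flow_matrix[OF fl] by metis
  then show ?thesis unfolding vdegree_def by (rule bij_betw_same_card)
qed

lemma sum_incident_flow_matrix:
  assumes fl: "is_flow \<mu>p \<mu>m V E m" and v: "v \<in> V"
  shows "(\<Sum>x\<in>{x \<in> V - {v}. flow_matrix E m x v \<noteq> 0}. flow_matrix E m x v) = \<mu>p v - \<mu>m v"
proof -
  have fin: "finite V" and bal: "\<forall>z\<in>V. \<mu>p z - \<mu>m z = (\<Sum>x\<in>V - {z}. flow_matrix E m x z)"
    using matrix_flow_flow_matrix[OF fl] unfolding matrix_flow_def by blast+
  have "(\<Sum>x\<in>{x \<in> V - {v}. flow_matrix E m x v \<noteq> 0}. flow_matrix E m x v)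
      = (\<Sum>x\<in>V - {v}. flow_matrix E m x v)"
    by (rule sum.mono_neutral_left) (use fin in auto)
  then show ?thesis using bal v by simp
qed

lemma vdegree_ne_1:
  assumes "is_flow \<mu>p \<mu>m V E m" and "v \<in> V" and "\<mu>p v = \<mu>m v"
  shows "vdegree E v \<noteq> 1"
proof
  assume "vdegree E v = 1"
  then obtain x where "{x \<in> V - {v}. flow_matrix E m x v \<noteq> 0} = {x}"
    using card_incident_flow_matrix[OF assms(1,2)] card_1_singletonE by metis
  then show False using sum_incident_flow_matrix[OF assms(1,2)] assms(3) by auto
qed

lemma solution_pair_direction_norm_le:
  fixes \<mu>p \<mu>m :: "'a::real_inner \<Rightarrow> real"
  assumes sol: "gilbert_steiner_solution p \<mu>p \<mu>m V E m"
    and V: "a \<in> V" "b \<in> V" "v \<in> V" and ne: "a \<noteq> v" "b \<noteq> v" "a \<noteq> b"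
  defines "f \<equiv> \<lambda>x. flow_matrix E m x v"
  shows "norm ((\<bar>f a\<bar> powr p / norm (a - v)) *\<^sub>R (a - v) + (\<bar>f b\<bar> powr p / norm (b - v)) *\<^sub>R (b - v))
       \<le> \<bar>f a + f b\<bar> powr p"
proof -
  have fin: "finite V" using sol unfolding gilbert_steiner_solution_def is_flow_def by blast
  have "norm (\<Sum>x\<in>{a, b}. (\<bar>f x\<bar> powr p / norm (x - v)) *\<^sub>R (x - v)) \<le> \<bar>f a + f b\<bar> powr p"
  proof (rule norm_sum_weighted_directions_le[OF fin])
    show "\<forall>w. w \<notin> V \<longrightarrow> (\<Sum>x\<in>{a, b}. \<bar>f x\<bar> powr p * dist x v)
        \<le> (\<Sum>x\<in>{a, b}. \<bar>f x\<bar> powr p * dist x w) + \<bar>f a + f b\<bar> powr p * dist v w"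
      using solution_reroute_le[OF sol V ne] ne unfolding f_def by simp
  qed (use ne in auto)
  then show ?thesis using ne by simp
qed

lemma solution_vdegree_le_3:
  fixes \<mu>p \<mu>m :: "'a::real_inner \<Rightarrow> real"
  assumes sol: "gilbert_steiner_solution p \<mu>p \<mu>m V E m" and p: "0 < p" "p < 1/2"
    and v: "v \<in> V" and bal: "\<mu>p v = \<mu>m v"
  shows "vdegree E v \<le> 3"
proof (rule ccontr)
  define f where "f x = flow_matrix E m x v" for x
  define N where "N = {x \<in> V - {v}. f x \<noteq> 0}"
  define W where "W x = (\<bar>f x\<bar> powr p / norm (x - v)) *\<^sub>R (x - v)" for x
  have fl: "is_flow \<mu>p \<mu>m V E m" using sol unfolding gilbert_steiner_solution_def by blast
  assume "\<not> vdegree E v \<le> 3"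
  then have card: "4 \<le> card N" using card_incident_flow_matrix[OF fl v] unfolding N_def f_def by simp
  have finN: "finite N" using fl unfolding N_def is_flow_def by simp
  have nz: "\<forall>x\<in>N. f x \<noteq> 0" and sum: "(\<Sum>x\<in>N. f x) = 0"
    using sum_incident_flow_matrix[OF fl v] bal unfolding N_def f_def by auto
  have q: "0 < 2 * p" "2 * p < 1" using p by auto
  have "\<forall>x\<in>N. (norm (W x))\<^sup>2 = \<bar>f x\<bar> powr (2 * p)"
    unfolding W_def N_def by (simp add: power2_eq_square powr_add[symmetric])
  moreover have "\<forall>x\<in>N. \<forall>y\<in>N - {x}. (norm (W x + W y))\<^sup>2 \<le> \<bar>f x + f y\<bar> powr (2 * p)"
  proof (intro ballI)
    fix x y assume "x \<in> N" "y \<in> N - {x}"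
    then have "norm (W x + W y) \<le> \<bar>f x + f y\<bar> powr p"
      unfolding W_def f_def N_def by (intro solution_pair_direction_norm_le[OF sol _ _ v]) auto
    then have "(norm (W x + W y))\<^sup>2 \<le> (\<bar>f x + f y\<bar> powr p)\<^sup>2" by (intro power_mono) auto
    then show "(norm (W x + W y))\<^sup>2 \<le> \<bar>f x + f y\<bar> powr (2 * p)"
      by (simp add: power2_eq_square powr_add[symmetric])
  qed
  ultimately have "0 \<le> pair_powr_excess (2 * p) N f"
    by (rule pair_powr_excess_nonneg_of_vectors[OF finN])
  then show False using pair_powr_excess_neg[OF q finN card nz sum] by simp
qed

theorem corollary1:
  fixes \<mu>p \<mu>m :: "'a::euclidean_space \<Rightarrow> real"
    and V :: "'a set" and E :: "'a set set" and m :: "'a \<Rightarrow> 'a \<Rightarrow> real"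
    and p :: real and v :: 'a
  assumes "DIM('a) \<ge> 2"
    and "0 < p" and "p < 1/2"
    and "fin_measure \<mu>p" and "fin_measure \<mu>m"
    and "(\<Sum>x\<in>supp_fun \<mu>p. \<mu>p x) = (\<Sum>x\<in>supp_fun \<mu>m. \<mu>m x)"
    and "gilbert_steiner_solution p \<mu>p \<mu>m V E m"
    and "branching_point \<mu>p \<mu>m V E v"
    and "vdegree E v \<noteq> 2"
  shows "vdegree E v = 3"
proof -
  have fl: "is_flow \<mu>p \<mu>m V E m" using assms(7) unfolding gilbert_steiner_solution_def by blast
  have v: "v \<in> V" and bal: "\<mu>p v = \<mu>m v" and deg: "1 \<le> vdegree E v"
    using assms(8) unfolding branching_point_def supp_fun_def by auto
  have "vdegree E v \<le> 3" using solution_vdegree_le_3[OF assms(7,2,3) v bal] .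
  moreover have "vdegree E v \<noteq> 1" using vdegree_ne_1[OF fl v bal] .
  ultimately show ?thesis using deg assms(9) by linarith
qed

end
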